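(* Assume the Bellman setting below, hypotheses (H1) and (H2), and that $A(P)$ is monotone for every $P\in\mathcal P$. Let $(U^\ell)_{\ell\ge 0}$ be any sequence produced by $\epsilon$-policy iteration on $\mathcal P$ (defined below). Then $(U^\ell)_\ell$ converges to a solution of the Bellman problem $\sup_{P\in\mathcal P}\{-A(P)U+y(P)\}=0$, and this solution is unique.
   Context: Bellman setting: Let $M\ge 0$ be an integer and $\mathcal P=\mathcal P_0\times\cdots\times\mathcal P_M$ a product of nonempty sets; write $P=(P_0,\dots,P_M)\in\mathcal P$. Let $A:\mathcal P\to\mathbb R^{(M+1)\times(M+1)}$ and $y:\mathcal P\to\mathbb R^{M+1}$ be row-decoupled: for each $i$, the $i$-th row of $A(P)$ and the $i$-th entry of $y(P)$ depend only on $P_i$. Inequalities between vectors (or matrices) are entrywise, and the supremum of a family of vectors is taken entrywise. The Bellman problem is to find $U\in\mathbb R^{M+1}$ with $\sup_{P\in\mathcal P}\{-A(P)U+y(P)\}=0$. Let $\vec e=(1,\dots,1)^\top\in\mathbb R^{M+1}$. A real square matrix is monotone if it is nonsingular and its inverse has nonnegative entries. (H1): the map $P\mapsto A(P)^{-1}$ is bounded on $\{P\in\mathcal P: A(P)\text{ nonsingular}\}$. (H2): $A$ and $y$ are bounded functions. $\epsilon$-policy iteration on a set $\mathcal Q=\mathcal Q_0\times\cdots\times\mathcal Q_M$ (with $\emptyset\ne\mathcal Q_i\subseteq\mathcal P_i$): pick any $U^0\in\mathbb R^{M+1}$ and any sequence $(\epsilon^\ell)_{\ell\ge1}$ of positive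 numbers with $\sum_\ell\epsilon^\ell<\infty$; for $\ell=1,2,\dots$ pick $P^\ell\in\mathcal Q$ with $-A(P^\ell)U^{\ell-1}+y(P^\ell)+\epsilon^\ell\vec e\ge\sup_{P\in\mathcal Q}\{-A(P)U^{\ell-1}+y(P)\}$ and let $U^\ell$ be the solution of $A(P^\ell)U^\ell=y(P^\ell)$. *)

theory Defs
  imports "HOL-Analysis.Analysis"
begin

definition bellman_sup ::
  "('n \<Rightarrow> 'p) set \<Rightarrow> (('n \<Rightarrow> 'p) \<Rightarrow> real^'n^'n) \<Rightarrow> (('n \<Rightarrow> 'p) \<Rightarrow> real^'n)
     \<Rightarrow> real^'n \<Rightarrow> real^'n" where
  "bellman_sup Q A y U = (\<chi> i. SUP P\<in>Q. (- (A P *v U) + y P) $ i)"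

definition monotone_matrix :: "real^'n^'n \<Rightarrow> bool" where
  "monotone_matrix B \<longleftrightarrow> invertible B \<and> (\<forall>i j. 0 \<le> matrix_inv B $ i $ j)"

end

theory Submission
  imports Defs
begin

text \<open>Write \<open>B(V) = sup\<^sub>P (y(P) - A(P) V)\<close>. If \<open>B(V) \<ge> 0 \<ge> B(W)\<close>, row decoupling
  glues near-maximising rows into a single policy \<open>P\<close> with \<open>A(P)(V - W) \<le> \<delta>\<close>, and
  monotonicity of \<open>A(P)\<close> together with the uniform bound on its inverse gives
  \<open>V \<le> W + C \<delta>\<close>; this comparison principle yields uniqueness. Applied to consecutive
  iterates of \<open>\<epsilon>\<close>-policy iteration the same estimate gives
  \<open>U(\<ell>) - U(\<ell>+1) \<le> C \<epsilon>(\<ell>+1)\<close>, so every component is bounded and increasing up to a summable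
  error, hence convergent; passing to the limit in the \<open>\<epsilon>\<close>-optimality of the chosen policies
  shows that the limit solves the Bellman equation.\<close>

lemma norm_matrix_vector_mult_le:
  fixes M :: "real^'n::finite^'m::finite"
  shows "norm (M *v x) \<le> norm M * norm x"
proof -
  have "norm (M *v x) = L2_set (\<lambda>i. \<bar>M $ i \<bullet> x\<bar>) UNIV"
    by (simp add: norm_vec_def matrix_mult_dot)
  also have "\<dots> \<le> L2_set (\<lambda>i. norm (M $ i) * norm x) UNIV"
    by (rule L2_set_mono) (simp_all add: Cauchy_Schwarz_ineq2)
  also have "\<dots> = norm M * norm x"
    by (simp add: norm_vec_def L2_set_left_distrib)
  finally show ?thesis .
qed

lemma abs_matrix_vector_mult_nth_le:
  fixes M :: "real^'n::finite^'m::finite"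
  shows "\<bar>(M *v x) $ i\<bar> \<le> norm M * norm x"
  using component_le_norm_cart norm_matrix_vector_mult_le order_trans by blast

lemma matrix_inv_mult_left:
  fixes M :: "'a::semiring_1^'n^'m"
  assumes "invertible M" shows "matrix_inv M ** M = mat 1"
  using assms unfolding invertible_def matrix_inv_def by (rule someI2_ex) auto

lemma monotone_matrix_solution_le:
  fixes M :: "real^'n::finite^'n"
  assumes "monotone_matrix M" and "\<And>k. (M *v x) $ k \<le> b $ k"
  shows "x $ i \<le> (matrix_inv M *v b) $ i"
proof -
  have "x = matrix_inv M *v (M *v x)"
    using assms(1) by (simp add: monotone_matrix_def matrix_vector_mul_assoc matrix_inv_mult_left)
  then have "(matrix_inv M *v b) $ i - x $ i = (matrix_inv M *v (b - M *v x)) $ i"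
    by (metis matrix_vector_mult_diff_distrib vector_minus_component)
  also have "\<dots> \<ge> 0"
    using assms by (auto simp: monotone_matrix_def matrix_vector_mult_def intro!: sum_nonneg)
  finally show ?thesis by simp
qed

lemma convergent_bdd_above_summable_drops:
  fixes u e :: "nat \<Rightarrow> real"
  assumes "bdd_above (range u)" and "summable e" and "\<And>n. u n - u (Suc n) \<le> e n"
  shows "convergent u"
proof -
  define S where "S = (\<lambda>n. \<Sum>k<n. e k)"
  have "convergent S"
    using assms(2) by (simp add: S_def summable_iff_convergent)
  then have "bdd_above (range S)"
    by (simp add: Bseq_bdd_above convergent_imp_Bseq)
  then obtain b where "\<And>n. u n + S n \<le> b"
    using assms(1) by (meson add_mono bdd_above.E rangeI)
  moreover have "incseq (\<lambda>n. u n + S n)"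
  proof (rule incseq_SucI)
    show "u n + S n \<le> u (Suc n) + S (Suc n)" for n
      using assms(3)[of n] by (simp add: S_def)
  qed
  ultimately have "convergent (\<lambda>n. u n + S n)"
    by (meson convergent_def incseq_convergent)
  from convergent_diff[OF this \<open>convergent S\<close>] show ?thesis
    by simp
qed

locale bellman_problem =
  fixes Ps :: "'n::finite \<Rightarrow> 'p set"
    and A :: "('n \<Rightarrow> 'p) \<Rightarrow> real^'n^'n"
    and y :: "('n \<Rightarrow> 'p) \<Rightarrow> real^'n"
  assumes nonempty: "\<And>i. Ps i \<noteq> {}"
    and row_decoupled: "\<And>P P' i. P \<in> (\<Pi> j\<in>UNIV. Ps j) \<Longrightarrow> P' \<in> (\<Pi> j\<in>UNIV. Ps j) \<Longrightarrow>
          P i = P' i \<Longrightarrow> A P $ i = A P' $ i \<and> y P $ i = y P' $ i"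
    and bounded_inv: "bounded {matrix_inv (A P) | P. P \<in> (\<Pi> j\<in>UNIV. Ps j) \<and> invertible (A P)}"
    and bounded_A: "bounded (A ` (\<Pi> j\<in>UNIV. Ps j))"
    and bounded_y: "bounded (y ` (\<Pi> j\<in>UNIV. Ps j))"
    and monotone_policy: "\<And>P. P \<in> (\<Pi> j\<in>UNIV. Ps j) \<Longrightarrow> monotone_matrix (A P)"
begin

abbreviation policies :: "('n \<Rightarrow> 'p) set" where
  "policies \<equiv> \<Pi> j\<in>UNIV. Ps j"

abbreviation residual :: "('n \<Rightarrow> 'p) \<Rightarrow> real^'n \<Rightarrow> real^'n" where
  "residual P V \<equiv> - (A P *v V) + y P"

abbreviation bellman :: "real^'n \<Rightarrow> real^'n" where
  "bellman \<equiv> bellman_sup policies A y"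

lemma policies_nonempty: "policies \<noteq> {}"
  using nonempty by (simp add: PiE_eq_empty_iff)

definition inv_bound :: real where
  "inv_bound = (SUP P\<in>policies. norm (matrix_inv (A P)))"

lemma norm_matrix_inv_le:
  assumes "P \<in> policies" shows "norm (matrix_inv (A P)) \<le> inv_bound"
proof -
  obtain K where K: "\<And>M. M \<in> {matrix_inv (A P) | P. P \<in> policies \<and> invertible (A P)} \<Longrightarrow> norm M \<le> K"
    using bounded_inv unfolding bounded_iff by blast
  have "norm (matrix_inv (A P)) \<le> K" if "P \<in> policies" for P
    using that monotone_policy[OF that] by (intro K) (auto simp: monotone_matrix_def)
  then have "bdd_above ((\<lambda>P. norm (matrix_inv (A P))) ` policies)"
    by (rule bdd_aboveI2)
  with assms show ?thesis
    unfolding inv_bound_def by (rule cSUP_upper)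
qed

lemma inv_bound_nonneg: "0 \<le> inv_bound"
proof -
  obtain P where "P \<in> policies"
    using policies_nonempty by blast
  then show ?thesis
    using norm_matrix_inv_le norm_ge_zero order_trans by blast
qed

lemma subsolution_le:
  assumes "P \<in> policies" and "0 \<le> c" and "\<And>k. (A P *v x) $ k \<le> c"
  shows "x $ i \<le> c * (inv_bound * norm (vec 1 :: real^'n))"
proof -
  have "x $ i \<le> (matrix_inv (A P) *v (c *\<^sub>R vec 1)) $ i"
    using monotone_matrix_solution_le[OF monotone_policy[OF assms(1)]] assms(3) by simp
  also have "\<dots> \<le> norm (matrix_inv (A P)) * norm (c *\<^sub>R (vec 1 :: real^'n))"
    using abs_matrix_vector_mult_nth_le abs_le_D1 by blast
  also have "\<dots> \<le> inv_bound * (c * norm (vec 1 :: real^'n))"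
    using norm_matrix_inv_le[OF assms(1)] assms(2) by (simp add: mult_right_mono)
  finally show ?thesis by (simp add: algebra_simps)
qed

lemma policy_matrix_bound:
  obtains K where "\<And>P v i. P \<in> policies \<Longrightarrow> \<bar>(A P *v v) $ i\<bar> \<le> K * norm v"
proof -
  obtain K where K: "\<And>P. P \<in> policies \<Longrightarrow> norm (A P) \<le> K"
    using bounded_A unfolding bounded_iff by blast
  have "\<bar>(A P *v v) $ i\<bar> \<le> K * norm v" if "P \<in> policies" for P v i
    using abs_matrix_vector_mult_nth_le[of "A P" v i] mult_right_mono[OF K[OF that] norm_ge_zero[of v]]
    by linarith
  with that show thesis .
qed

lemma bdd_above_residuals: "bdd_above ((\<lambda>P. residual P V $ i) ` policies)"
proof -
  obtain KA where KA: "\<And>P v i. P \<in> policies \<Longrightarrow> \<bar>(A P *v v) $ i\<bar> \<le> KA * norm v"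
    using policy_matrix_bound by blast
  obtain KY where KY: "\<And>P. P \<in> policies \<Longrightarrow> norm (y P) \<le> KY"
    using bounded_y unfolding bounded_iff by blast
  have "residual P V $ i \<le> KA * norm V + KY" if "P \<in> policies" for P
    using KA[OF that, of V i] component_le_norm_cart[of "y P" i] KY[OF that] by simp
  then show ?thesis
    by (rule bdd_aboveI2)
qed

lemma residual_le_bellman: "P \<in> policies \<Longrightarrow> residual P V $ i \<le> bellman V $ i"
  unfolding bellman_sup_def vec_lambda_beta by (rule cSUP_upper[OF _ bdd_above_residuals])

lemma bellman_le: "(\<And>P. P \<in> policies \<Longrightarrow> residual P V $ i \<le> c) \<Longrightarrow> bellman V $ i \<le> c"
  unfolding bellman_sup_def vec_lambda_beta by (rule cSUP_least[OF policies_nonempty])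

lemma policy_near_bellman:
  assumes "0 < d"
  obtains P where "P \<in> policies" and "\<And>k. bellman V $ k - d < residual P V $ k"
proof -
  have "\<exists>Q\<in>policies. bellman V $ k - d < residual Q V $ k" for k
    using assms less_cSUP_iff[OF policies_nonempty bdd_above_residuals, of "bellman V $ k - d" V k]
    by (simp add: bellman_sup_def)
  then obtain Q where Q: "\<And>k. Q k \<in> policies" "\<And>k. bellman V $ k - d < residual (Q k) V $ k"
    by metis
  \<comment> \<open>row decoupling: row \<open>j\<close> of the glued policy behaves like row \<open>j\<close> of \<open>Q j\<close>\<close>
  define P where "P = (\<lambda>j. Q j j)"
  have P: "P \<in> policies"
    using Q(1) by (auto simp: P_def)
  have "residual P V $ k = residual (Q k) V $ k" for k
    using row_decoupled[OF P Q(1), of k] by (simp add: P_def matrix_vector_mult_def)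
  with P Q(2) show thesis
    by (intro that) auto
qed

lemma bellman_comparison:
  assumes "\<And>k. 0 \<le> bellman V $ k" and "\<And>k. bellman W $ k \<le> 0"
  shows "V $ i \<le> W $ i"
proof (rule field_le_epsilon)
  fix t :: real
  assume "0 < t"
  define C where "C = inv_bound * norm (vec 1 :: real^'n)"
  have "0 \<le> C"
    by (simp add: C_def inv_bound_nonneg)
  define d where "d = t / (C + 1)"
  have d: "0 < d" "d * C \<le> t"
    using \<open>0 < t\<close> \<open>0 \<le> C\<close> by (simp_all add: d_def field_simps)
  obtain P where P: "P \<in> policies" "\<And>k. bellman V $ k - d < residual P V $ k"
    using policy_near_bellman[OF d(1)] by blast
  have "(A P *v (V - W)) $ k \<le> d" for k
    using P(2)[of k] assms(1)[of k] residual_le_bellman[OF P(1), of W k] assms(2)[of k]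
    by (simp add: matrix_vector_mult_diff_distrib)
  then have "(V - W) $ i \<le> d * C"
    unfolding C_def by (rule subsolution_le[OF P(1) less_imp_le[OF d(1)]])
  with d(2) show "V $ i \<le> W $ i + t"
    by simp
qed

lemma bellman_solution_unique: "bellman V = 0 \<Longrightarrow> bellman W = 0 \<Longrightarrow> V = W"
  by (simp add: vec_eq_iff antisym bellman_comparison)

end

locale eps_policy_iteration = bellman_problem Ps A y
  for Ps :: "'n::finite \<Rightarrow> 'p set" and A y +
  fixes U :: "nat \<Rightarrow> real^'n"
    and Pol :: "nat \<Rightarrow> ('n \<Rightarrow> 'p)"
    and eps :: "nat \<Rightarrow> real"
  assumes eps_pos: "\<And>l. l \<ge> 1 \<Longrightarrow> 0 < eps l"
    and eps_sum: "summable eps"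
    and pol_in: "\<And>l. l \<ge> 1 \<Longrightarrow> Pol l \<in> (\<Pi> j\<in>UNIV. Ps j)"
    and pol_eps: "\<And>l i. l \<ge> 1 \<Longrightarrow>
          (- (A (Pol l) *v U (l - 1)) + y (Pol l)) $ i + eps l
            \<ge> bellman_sup (\<Pi> j\<in>UNIV. Ps j) A y (U (l - 1)) $ i"
    and solve: "\<And>l. l \<ge> 1 \<Longrightarrow> A (Pol l) *v U l = y (Pol l)"
begin

lemma residual_policy_iterate: "1 \<le> l \<Longrightarrow> residual (Pol l) V $ i = (A (Pol l) *v (U l - V)) $ i"
  using solve by (simp add: matrix_vector_mult_diff_distrib)

lemma bellman_iterate_le:
  "bellman (U l) $ i \<le> (A (Pol (Suc l)) *v (U (Suc l) - U l)) $ i + eps (Suc l)"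
  using pol_eps[of "Suc l" i] residual_policy_iterate[of "Suc l" "U l" i] by simp

lemma iterate_drop_le:
  assumes "1 \<le> l"
  shows "U l $ i - U (Suc l) $ i \<le> eps (Suc l) * (inv_bound * norm (vec 1 :: real^'n))"
proof -
  have "(A (Pol (Suc l)) *v (U l - U (Suc l))) $ k \<le> eps (Suc l)" for k
  proof -
    have "0 \<le> bellman (U l) $ k"
      using residual_le_bellman[OF pol_in[OF assms], of "U l" k] residual_policy_iterate[OF assms, of "U l" k]
      by simp
    with bellman_iterate_le[of l k] show ?thesis
      by (simp add: matrix_vector_mult_diff_distrib)
  qed
  then show ?thesis
    using subsolution_le[OF pol_in[of "Suc l"] less_imp_le[OF eps_pos[of "Suc l"]], of "U l - U (Suc l)" i]
    by simp
qed

lemma iterates_bdd_above: "bdd_above (range (\<lambda>n. U (Suc n) $ i))"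
proof -
  obtain KY where KY: "\<And>P. P \<in> policies \<Longrightarrow> norm (y P) \<le> KY"
    using bounded_y unfolding bounded_iff by blast
  have "U l $ i \<le> inv_bound * KY" if "1 \<le> l" for l
  proof -
    have "U l = matrix_inv (A (Pol l)) *v y (Pol l)"
      using monotone_policy[OF pol_in[OF that]] solve[OF that]
      by (metis matrix_inv_mult_left matrix_vector_mul_assoc matrix_vector_mul_lid monotone_matrix_def)
    then have "U l $ i \<le> norm (matrix_inv (A (Pol l))) * norm (y (Pol l))"
      using abs_matrix_vector_mult_nth_le abs_le_D1 by metis
    also have "\<dots> \<le> inv_bound * KY"
      using norm_matrix_inv_le[OF pol_in[OF that]] KY[OF pol_in[OF that]] inv_bound_nonneg
      by (simp add: mult_mono)
    finally show ?thesis .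
  qed
  then have "U (Suc n) $ i \<le> inv_bound * KY" for n
    by simp
  then show ?thesis
    by (rule bdd_aboveI2)
qed

lemma iterates_convergent: "convergent U"
proof -
  have "convergent (\<lambda>n. U (Suc n) $ i)" for i
  proof (rule convergent_bdd_above_summable_drops[OF iterates_bdd_above])
    show "summable (\<lambda>n. eps (Suc (Suc n)) * (inv_bound * norm (vec 1 :: real^'n)))"
      using eps_sum by (intro summable_mult2) (simp add: summable_Suc_iff[of "\<lambda>n. eps (Suc n)"] summable_Suc_iff[of eps])
    show "U (Suc n) $ i - U (Suc (Suc n)) $ i \<le> eps (Suc (Suc n)) * (inv_bound * norm (vec 1 :: real^'n))" for n
      by (rule iterate_drop_le) simp
  qed
  then obtain L where "\<And>i. (\<lambda>n. U (Suc n) $ i) \<longlonglongrightarrow> L i"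
    unfolding convergent_def by metis
  then have "(\<lambda>n. U (Suc n)) \<longlonglongrightarrow> (\<chi> i. L i)"
    by (intro vec_tendstoI) simp
  then show ?thesis
    by (metis convergent_Suc_iff convergent_def)
qed

lemma limit_bellman_nonneg:
  assumes "U \<longlonglongrightarrow> V"
  shows "0 \<le> bellman V $ i"
proof -
  obtain K where K: "\<And>P v i. P \<in> policies \<Longrightarrow> \<bar>(A P *v v) $ i\<bar> \<le> K * norm v"
    using policy_matrix_bound by blast
  have "(\<lambda>l. - (K * norm (U l - V))) \<longlonglongrightarrow> 0"
    using assms by (intro tendsto_eq_intros) (auto simp: LIM_zero)
  moreover have "- (K * norm (U l - V)) \<le> bellman V $ i" if "1 \<le> l" for l
    using residual_le_bellman[OF pol_in[OF that], of V i] K[OF pol_in[OF that], of "U l - V" i]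
      residual_policy_iterate[OF that, of V i] by simp
  then have "\<forall>\<^sub>F l in sequentially. - (K * norm (U l - V)) \<le> bellman V $ i"
    unfolding eventually_sequentially by blast
  ultimately show ?thesis
    by (rule tendsto_upperbound) simp
qed

lemma limit_bellman_nonpos:
  assumes "U \<longlonglongrightarrow> V"
  shows "bellman V $ i \<le> 0"
proof (rule bellman_le)
  fix P
  assume P: "P \<in> policies"
  obtain K where K: "\<And>P v i. P \<in> policies \<Longrightarrow> \<bar>(A P *v v) $ i\<bar> \<le> K * norm v"
    using policy_matrix_bound by blast
  show "residual P V $ i \<le> 0"
  proof (rule tendsto_le[OF trivial_limit_sequentially])
    show "(\<lambda>l. residual P (U l) $ i) \<longlonglongrightarrow> residual P V $ i"
      using assms by (intro tendsto_intros bounded_linear.tendsto[OF matrix_vector_mul_bounded_linear])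
    show "(\<lambda>l. K * norm (U (Suc l) - U l) + eps (Suc l)) \<longlonglongrightarrow> 0"
      using assms LIMSEQ_Suc[OF assms] LIMSEQ_Suc[OF summable_LIMSEQ_zero[OF eps_sum]]
      by (intro tendsto_eq_intros) auto
    have "residual P (U l) $ i \<le> K * norm (U (Suc l) - U l) + eps (Suc l)" for l
      using residual_le_bellman[OF P, of "U l" i] bellman_iterate_le[of l i]
        K[OF pol_in[of "Suc l"], of "U (Suc l) - U l" i] by simp
    then show "\<forall>\<^sub>F l in sequentially. residual P (U l) $ i \<le> K * norm (U (Suc l) - U l) + eps (Suc l)"
      by simp
  qed
qed

lemma limit_solves_bellman: "U \<longlonglongrightarrow> V \<Longrightarrow> bellman V = 0"
  by (simp add: vec_eq_iff antisym limit_bellman_nonneg limit_bellman_nonpos)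

end

theorem theorem3p2:
  fixes Ps :: "'n::finite \<Rightarrow> 'p set"
    and A :: "('n \<Rightarrow> 'p) \<Rightarrow> real^'n^'n"
    and y :: "('n \<Rightarrow> 'p) \<Rightarrow> real^'n"
    and U :: "nat \<Rightarrow> real^'n"
    and Pol :: "nat \<Rightarrow> ('n \<Rightarrow> 'p)"
    and eps :: "nat \<Rightarrow> real"
  assumes nonempty: "\<And>i. Ps i \<noteq> {}"
    and row_decoupled: "\<And>P P' i. P \<in> (\<Pi> j\<in>UNIV. Ps j) \<Longrightarrow> P' \<in> (\<Pi> j\<in>UNIV. Ps j) \<Longrightarrow>
          P i = P' i \<Longrightarrow> A P $ i = A P' $ i \<and> y P $ i = y P' $ i"
    and H1: "bounded {matrix_inv (A P) | P. P \<in> (\<Pi> j\<in>UNIV. Ps j) \<and> invertible (A P)}"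
    and H2: "bounded (A ` (\<Pi> j\<in>UNIV. Ps j))" "bounded (y ` (\<Pi> j\<in>UNIV. Ps j))"
    and mono: "\<And>P. P \<in> (\<Pi> j\<in>UNIV. Ps j) \<Longrightarrow> monotone_matrix (A P)"
    and eps_pos: "\<And>l. l \<ge> 1 \<Longrightarrow> 0 < eps l"
    and eps_sum: "summable eps"
    and pol_in: "\<And>l. l \<ge> 1 \<Longrightarrow> Pol l \<in> (\<Pi> j\<in>UNIV. Ps j)"
    and pol_eps: "\<And>l i. l \<ge> 1 \<Longrightarrow>
          (- (A (Pol l) *v U (l - 1)) + y (Pol l)) $ i + eps l
            \<ge> bellman_sup (\<Pi> j\<in>UNIV. Ps j) A y (U (l - 1)) $ i"
    and solve: "\<And>l. l \<ge> 1 \<Longrightarrow> A (Pol l) *v U l = y (Pol l)"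
  shows "\<exists>Ustar. U \<longlonglongrightarrow> Ustar
           \<and> bellman_sup (\<Pi> j\<in>UNIV. Ps j) A y Ustar = 0
           \<and> (\<forall>V. bellman_sup (\<Pi> j\<in>UNIV. Ps j) A y V = 0 \<longrightarrow> V = Ustar)"
proof -
  interpret eps_policy_iteration Ps A y U Pol eps
    by unfold_locales (fact assms)+
  obtain Ustar where "U \<longlonglongrightarrow> Ustar"
    using iterates_convergent unfolding convergent_def by blast
  then show ?thesis
    using limit_solves_bellman bellman_solution_unique by blast
qed

end
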